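(* Let $S$ be a completely simple semigroup definable in $\mathcal{M}$. Then there exist definable sets $I,\Lambda$, a definable group $G$ and a definable map $P:\Lambda\times I\to G$ such that $S$ is definably isomorphic to the Rees matrix semigroup $\mathscr{M}(I,G,\Lambda,P)$.
   Context: $\mathcal{M}$ is a sufficiently saturated o-minimal structure with definable choice; "definable" means definable with parameters. A semigroup is simple if it has no proper ideals, and completely simple if it is simple and has a primitive idempotent ($e$ with: $f$ idempotent and $ef=fe=f$ imply $f=e$). For a group $G$, nonempty sets $I,\Lambda$ and $P:\Lambda\times I\to G$, $\mathscr{M}(I,G,\Lambda,P)$ is the set $I\times G\times\Lambda$ with product $(i,g,\lambda)(j,h,\mu)=(i,g\,P(\lambda,j)\,h,\mu)$. *)

theory Defs
  imports "HOL-Algebra.Group" "HOL-Library.Countable_Set"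
begin

text \<open>An n-tuple of M is a list of length n; a structure is given (as in van den Dries,
  Tame Topology and O-minimal Structures, Ch. 1) by the collections Def n of definable
  (with parameters) subsets of M^n.\<close>

definition tuples :: "nat \<Rightarrow> 'a list set" where
  "tuples n = {xs. length xs = n}"

definition basic_interval :: "'a::linorder set \<Rightarrow> bool" where
  "basic_interval J \<longleftrightarrow> (\<exists>a. J = {a}) \<or> (\<exists>a b. J = {a<..<b}) \<or> (\<exists>a. J = {a<..})
      \<or> (\<exists>b. J = {..<b}) \<or> J = UNIV"

definition o_minimal_structure :: "(nat \<Rightarrow> 'a::linorder list set set) \<Rightarrow> bool" where
  "o_minimal_structure Def \<longleftrightarrow>
     (\<forall>n. Def n \<subseteq> Pow (tuples n)) \<and>
     (\<forall>n. {} \<in> Def n \<and> tuples n \<in> Def n) \<and>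
     (\<forall>n A B. A \<in> Def n \<longrightarrow> B \<in> Def n \<longrightarrow> A \<union> B \<in> Def n) \<and>
     (\<forall>n A. A \<in> Def n \<longrightarrow> tuples n - A \<in> Def n) \<and>
     (\<forall>n A. A \<in> Def n \<longrightarrow> {xs @ [y] |xs y. xs \<in> A} \<in> Def (Suc n)
                          \<and> {y # xs |xs y. xs \<in> A} \<in> Def (Suc n)) \<and>
     (\<forall>n. {xs \<in> tuples (Suc (Suc n)). hd xs = last xs} \<in> Def (Suc (Suc n))) \<and>
     (\<forall>n A. A \<in> Def (Suc n) \<longrightarrow> butlast ` A \<in> Def n) \<and>
     {[x, y] |x y. x < y} \<in> Def 2 \<and>
     (\<forall>a. {[a]} \<in> Def 1) \<and>
     (\<forall>A \<in> Def 1. \<exists>F. finite F \<and> (\<forall>J\<in>F. basic_interval J) \<and> A = {[x] |x. \<exists>J\<in>F. x \<in> J})"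

definition definable_fun ::
  "(nat \<Rightarrow> 'a list set set) \<Rightarrow> nat \<Rightarrow> nat \<Rightarrow> 'a list set \<Rightarrow> ('a list \<Rightarrow> 'a list) \<Rightarrow> bool" where
  "definable_fun Def n m A f \<longleftrightarrow>
     A \<in> Def n \<and> f ` A \<subseteq> tuples m \<and> {x @ f x |x. x \<in> A} \<in> Def (n + m)"

definition fiber :: "'a list set \<Rightarrow> 'a list \<Rightarrow> 'a list set" where
  "fiber X t = {y. t @ y \<in> X}"

definition definable_choice :: "(nat \<Rightarrow> 'a list set set) \<Rightarrow> bool" where
  "definable_choice Def \<longleftrightarrow>
     (\<forall>m n X. X \<in> Def (m + n) \<longrightarrow>
        (\<exists>f. definable_fun Def m n (take m ` X) f \<and>
             (\<forall>t \<in> take m ` X. t @ f t \<in> X) \<and>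
             (\<forall>s \<in> take m ` X. \<forall>t \<in> take m ` X. fiber X s = fiber X t \<longrightarrow> f s = f t)))"

definition aleph1_saturated :: "(nat \<Rightarrow> 'a list set set) \<Rightarrow> bool" where
  "aleph1_saturated Def \<longleftrightarrow>
     (\<forall>n \<X>. countable \<X> \<longrightarrow> \<X> \<subseteq> Def n \<longrightarrow>
        (\<forall>\<F>. \<F> \<subseteq> \<X> \<longrightarrow> finite \<F> \<longrightarrow> (\<exists>x \<in> tuples n. \<forall>X\<in>\<F>. x \<in> X)) \<longrightarrow>
        (\<exists>x \<in> tuples n. \<forall>X\<in>\<X>. x \<in> X))"

definition definable_op ::
  "(nat \<Rightarrow> 'a list set set) \<Rightarrow> nat \<Rightarrow> 'a list set \<Rightarrow> ('a list \<Rightarrow> 'a list \<Rightarrow> 'a list) \<Rightarrow> bool" where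
  "definable_op Def n S m \<longleftrightarrow>
     S \<in> Def n \<and> (\<forall>x\<in>S. \<forall>y\<in>S. m x y \<in> S) \<and>
     {x @ y @ m x y |x y. x \<in> S \<and> y \<in> S} \<in> Def (n + n + n)"

definition semigroup_on :: "'b set \<Rightarrow> ('b \<Rightarrow> 'b \<Rightarrow> 'b) \<Rightarrow> bool" where
  "semigroup_on S m \<longleftrightarrow> (\<forall>x\<in>S. \<forall>y\<in>S. m x y \<in> S) \<and>
     (\<forall>x\<in>S. \<forall>y\<in>S. \<forall>z\<in>S. m (m x y) z = m x (m y z))"

definition is_ideal :: "'b set \<Rightarrow> ('b \<Rightarrow> 'b \<Rightarrow> 'b) \<Rightarrow> 'b set \<Rightarrow> bool" where
  "is_ideal S m J \<longleftrightarrow> J \<subseteq> S \<and> (\<forall>s\<in>S. \<forall>j\<in>J. m s j \<in> J \<and> m j s \<in> J)"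

definition simple_semigroup :: "'b set \<Rightarrow> ('b \<Rightarrow> 'b \<Rightarrow> 'b) \<Rightarrow> bool" where
  "simple_semigroup S m \<longleftrightarrow> semigroup_on S m \<and>
     (\<forall>J. is_ideal S m J \<and> J \<noteq> {} \<longrightarrow> J = S)"

definition primitive_idempotent :: "'b set \<Rightarrow> ('b \<Rightarrow> 'b \<Rightarrow> 'b) \<Rightarrow> 'b \<Rightarrow> bool" where
  "primitive_idempotent S m e \<longleftrightarrow> e \<in> S \<and> m e e = e \<and>
     (\<forall>f\<in>S. m f f = f \<and> m e f = f \<and> m f e = f \<longrightarrow> f = e)"

definition completely_simple :: "'b set \<Rightarrow> ('b \<Rightarrow> 'b \<Rightarrow> 'b) \<Rightarrow> bool" where
  "completely_simple S m \<longleftrightarrow> simple_semigroup S m \<and> (\<exists>e. primitive_idempotent S m e)"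

definition rees_mult ::
  "('g \<Rightarrow> 'g \<Rightarrow> 'g) \<Rightarrow> ('l \<Rightarrow> 'i \<Rightarrow> 'g) \<Rightarrow> 'i \<times> 'g \<times> 'l \<Rightarrow> 'i \<times> 'g \<times> 'l \<Rightarrow> 'i \<times> 'g \<times> 'l" where
  "rees_mult mg P x y = (case x of (i, g, l) \<Rightarrow> case y of (j, h, mu) \<Rightarrow> (i, mg (mg g (P l j)) h, mu))"

end

theory Submission
  imports Defs
begin

(* Fix a primitive idempotent e. The set G = eSe is a group with identity e: primitivity makes e
   its only idempotent, and simplicity (y = u x v for all x, y) yields inverses. Put
   I = {i idempotent. i e = i} and \<Lambda> = {l idempotent. e l = l}; then e i = e and l e = e.
   If w is the inverse of e x e in G, then x w x = x, and x = (x w) (e x e) (w x) is the unique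
   factorisation of x as i g l with i \<in> I, g \<in> G, l \<in> \<Lambda>. Multiplying two such factorisations,
   the middle factor is g (l j) h, so x \<mapsto> (x w, e x e, w x) is an isomorphism onto the Rees
   matrix semigroup with sandwich matrix P(l, i) = l i. All sets and maps involved are given by
   first-order formulas in the multiplication with the parameter e, so they are definable. *)

section \<open>Completely simple semigroups\<close>

lemma simple_semigroup_divides:
  assumes "simple_semigroup S m" "x \<in> S" "y \<in> S"
  shows "\<exists>u\<in>S. \<exists>v\<in>S. y = m (m u x) v"
proof -
  have cl: "\<And>a b. a \<in> S \<Longrightarrow> b \<in> S \<Longrightarrow> m a b \<in> S"
    and as: "\<And>a b c. a \<in> S \<Longrightarrow> b \<in> S \<Longrightarrow> c \<in> S \<Longrightarrow> m (m a b) c = m a (m b c)"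
    using assms(1) unfolding simple_semigroup_def semigroup_on_def by blast+
  define J where "J = {m (m u x) v |u v. u \<in> S \<and> v \<in> S}"
  have "is_ideal S m J" unfolding is_ideal_def
  proof (intro conjI ballI)
    show "J \<subseteq> S" unfolding J_def using assms(2) cl by blast
    fix s j assume s: "s \<in> S" and "j \<in> J"
    then obtain u v where uv: "j = m (m u x) v" "u \<in> S" "v \<in> S" unfolding J_def by blast
    have "m s j = m (m (m s u) x) v" "m j s = m (m u x) (m v s)"
      using uv s assms(2) by (simp_all add: as cl)
    then show "m s j \<in> J" "m j s \<in> J" unfolding J_def using uv s cl by blast+
  qed
  moreover have "J \<noteq> {}" unfolding J_def using assms(2) by blast
  ultimately have "J = S" using assms(1) unfolding simple_semigroup_def by blast
  then show ?thesis using assms(3) unfolding J_def by blast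
qed

locale completely_simple_semigroup =
  fixes S :: "'b set" and m :: "'b \<Rightarrow> 'b \<Rightarrow> 'b" (infixl "\<cdot>" 70) and e :: 'b
  assumes simple: "simple_semigroup S m"
    and primitive: "primitive_idempotent S m e"
begin

lemma closed [simp]: "x \<in> S \<Longrightarrow> y \<in> S \<Longrightarrow> x \<cdot> y \<in> S"
  and assoc [simp]: "x \<in> S \<Longrightarrow> y \<in> S \<Longrightarrow> z \<in> S \<Longrightarrow> x \<cdot> y \<cdot> z = x \<cdot> (y \<cdot> z)"
  using simple unfolding simple_semigroup_def semigroup_on_def by blast+

lemma e_in_S [simp]: "e \<in> S" and e_idem [simp]: "e \<cdot> e = e"
  using primitive unfolding primitive_idempotent_def by blast+

lemma divides: "x \<in> S \<Longrightarrow> y \<in> S \<Longrightarrow> \<exists>u\<in>S. \<exists>v\<in>S. y = u \<cdot> x \<cdot> v"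
  using simple_semigroup_divides[OF simple] .

definition G :: "'b set" where "G = {g \<in> S. e \<cdot> g = g \<and> g \<cdot> e = g}"
definition I :: "'b set" where "I = {i \<in> S. i \<cdot> i = i \<and> i \<cdot> e = i}"
definition \<Lambda> :: "'b set" where "\<Lambda> = {l \<in> S. l \<cdot> l = l \<and> e \<cdot> l = l}"

abbreviation group_G :: "'b monoid" where "group_G \<equiv> \<lparr>carrier = G, mult = (\<cdot>), one = e\<rparr>"

lemma G_in_S [simp]: "g \<in> G \<Longrightarrow> g \<in> S"
  and e_mult_G [simp]: "g \<in> G \<Longrightarrow> e \<cdot> g = g"
  and G_mult_e [simp]: "g \<in> G \<Longrightarrow> g \<cdot> e = g"
  by (simp_all add: G_def)

lemma e_mult_G' [simp]: assumes "g \<in> G" "z \<in> S" shows "e \<cdot> (g \<cdot> z) = g \<cdot> z"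
proof -
  have "e \<cdot> (g \<cdot> z) = e \<cdot> g \<cdot> z" using assms by (simp del: e_mult_G)
  also have "\<dots> = g \<cdot> z" using assms by (simp only: e_mult_G)
  finally show ?thesis .
qed

lemma G_mult_e' [simp]: assumes "g \<in> G" "z \<in> S" shows "g \<cdot> (e \<cdot> z) = g \<cdot> z"
proof -
  have "g \<cdot> (e \<cdot> z) = g \<cdot> e \<cdot> z" using assms by (simp del: G_mult_e)
  also have "\<dots> = g \<cdot> z" using assms by (simp only: G_mult_e)
  finally show ?thesis .
qed

lemma e_in_G [simp]: "e \<in> G"
  unfolding G_def by simp

lemma G_closed [simp]: assumes "g \<in> G" "h \<in> G" shows "g \<cdot> h \<in> G"
proof -
  have "g \<cdot> h \<in> S" "e \<cdot> (g \<cdot> h) = g \<cdot> h" "g \<cdot> h \<cdot> e = g \<cdot> h" using assms by simp_all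
  then show ?thesis unfolding G_def by blast
qed

lemma sandwich_in_G [simp]: assumes "x \<in> S" shows "e \<cdot> (x \<cdot> e) \<in> G"
proof -
  have "e \<cdot> (x \<cdot> e) \<in> S" "e \<cdot> (e \<cdot> (x \<cdot> e)) = e \<cdot> (x \<cdot> e)" "e \<cdot> (x \<cdot> e) \<cdot> e = e \<cdot> (x \<cdot> e)"
    using assms by simp_all
  then show ?thesis unfolding G_def by blast
qed

lemma idempotent_in_G: "g \<in> G \<Longrightarrow> g \<cdot> g = g \<Longrightarrow> g = e"
  using primitive unfolding primitive_idempotent_def G_def by blast

lemma G_left_inverse:
  assumes g: "g \<in> G" shows "\<exists>h\<in>G. h \<cdot> g = e"
proof -
  obtain u v where uv: "u \<in> S" "v \<in> S" "u \<cdot> g \<cdot> v = e"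
    using divides[of g e] g by (metis G_in_S e_in_S)
  define a where "a = e \<cdot> u \<cdot> e"
  define b where "b = e \<cdot> v \<cdot> e"
  have ab: "a \<in> G" "b \<in> G" using uv by (simp_all add: a_def b_def)
  have "a \<cdot> g \<cdot> b = e \<cdot> (u \<cdot> g \<cdot> v) \<cdot> e" using uv(1,2) g by (simp add: a_def b_def)
  also have "\<dots> = e" by (simp only: uv(3) e_idem)
  finally have agb: "a \<cdot> g \<cdot> b = e" .
  have "b \<cdot> (a \<cdot> g) \<cdot> (b \<cdot> (a \<cdot> g)) = b \<cdot> (a \<cdot> g \<cdot> b) \<cdot> (a \<cdot> g)"
    using ab g by simp
  then have "b \<cdot> (a \<cdot> g) = e" using agb ab g by (intro idempotent_in_G) simp_all
  then show ?thesis using ab g by (intro bexI[of _ "b \<cdot> a"]) simp_all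
qed

lemma group_G: "group group_G"
  by (rule groupI) (auto dest: G_left_inverse)

interpretation G: group group_G by (rule group_G)

abbreviation inv_G :: "'b \<Rightarrow> 'b" where "inv_G \<equiv> m_inv group_G"

lemma inv_G_in_G [simp]: "g \<in> G \<Longrightarrow> inv_G g \<in> G"
  and inv_G_left [simp]: "g \<in> G \<Longrightarrow> inv_G g \<cdot> g = e"
  and inv_G_right [simp]: "g \<in> G \<Longrightarrow> g \<cdot> inv_G g = e"
  using G.inv_closed G.l_inv G.r_inv by simp_all

lemma inv_G_left' [simp]: "g \<in> G \<Longrightarrow> z \<in> S \<Longrightarrow> inv_G g \<cdot> (g \<cdot> z) = e \<cdot> z"
  by (metis G_in_S assoc inv_G_in_G inv_G_left)

definition core :: "'b \<Rightarrow> 'b" where "core x = e \<cdot> x \<cdot> e"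
definition inv_S :: "'b \<Rightarrow> 'b" where "inv_S x = inv_G (core x)"
definition row :: "'b \<Rightarrow> 'b" where "row x = x \<cdot> inv_S x"
definition col :: "'b \<Rightarrow> 'b" where "col x = inv_S x \<cdot> x"

lemma core_in_G [simp]: "x \<in> S \<Longrightarrow> core x \<in> G"
  by (simp add: core_def)

lemma inv_S_in_G [simp]: "x \<in> S \<Longrightarrow> inv_S x \<in> G"
  by (simp add: inv_S_def)

lemma mult_inv_S_mult: assumes x: "x \<in> S" shows "x \<cdot> inv_S x \<cdot> x = x"
proof -
  obtain u v where uv: "u \<in> S" "v \<in> S" "x = u \<cdot> e \<cdot> v" using divides[of e x] x by auto
  define a where "a = e \<cdot> u \<cdot> e"
  define b where "b = e \<cdot> v \<cdot> e"
  have ab: "a \<in> G" "b \<in> G" using uv by (simp_all add: a_def b_def)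
  have "core x = a \<cdot> b" using uv by (simp add: core_def a_def b_def)
  then have "inv_S x = inv_G b \<cdot> inv_G a"
    using G.inv_mult_group[of a b] ab by (simp add: inv_S_def)
  then have "b \<cdot> inv_S x \<cdot> a = e" using ab by simp
  moreover have "x \<cdot> inv_S x \<cdot> x = u \<cdot> (b \<cdot> inv_S x \<cdot> a) \<cdot> v"
    using uv x by (simp add: a_def b_def)
  ultimately show ?thesis using uv by simp
qed

lemma inv_S_mult_inv_S: assumes x: "x \<in> S" shows "inv_S x \<cdot> x \<cdot> inv_S x = inv_S x"
proof -
  have "inv_S x \<cdot> x \<cdot> inv_S x = inv_S x \<cdot> core x \<cdot> inv_S x" using x by (simp add: core_def)
  then show ?thesis using x by (simp add: inv_S_def)
qed

lemma I_in_S [simp]: "i \<in> I \<Longrightarrow> i \<in> S" and Lambda_in_S [simp]: "l \<in> \<Lambda> \<Longrightarrow> l \<in> S"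
  by (simp_all add: I_def \<Lambda>_def)

lemma I_idem [simp]: "i \<in> I \<Longrightarrow> i \<cdot> i = i" and I_mult_e [simp]: "i \<in> I \<Longrightarrow> i \<cdot> e = i"
  and Lambda_idem [simp]: "l \<in> \<Lambda> \<Longrightarrow> l \<cdot> l = l" and e_mult_Lambda [simp]: "l \<in> \<Lambda> \<Longrightarrow> e \<cdot> l = l"
  unfolding I_def \<Lambda>_def by simp_all

lemma I_idem' [simp]: "i \<in> I \<Longrightarrow> z \<in> S \<Longrightarrow> i \<cdot> (i \<cdot> z) = i \<cdot> z"
  by (metis I_idem I_in_S assoc)

lemma e_in_I: "e \<in> I" and e_in_Lambda: "e \<in> \<Lambda>"
  unfolding I_def \<Lambda>_def by simp_all

lemma row_in_I: assumes x: "x \<in> S" shows "row x \<in> I"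
proof -
  have "row x \<cdot> row x = x \<cdot> (inv_S x \<cdot> x \<cdot> inv_S x)" using x by (simp add: row_def)
  then show ?thesis using x inv_S_mult_inv_S[OF x] unfolding I_def by (simp add: row_def)
qed

lemma col_in_Lambda: assumes x: "x \<in> S" shows "col x \<in> \<Lambda>"
proof -
  have "col x \<cdot> col x = inv_S x \<cdot> x \<cdot> inv_S x \<cdot> x" using x by (simp add: col_def)
  then show ?thesis using x inv_S_mult_inv_S[OF x] unfolding \<Lambda>_def by (simp add: col_def)
qed

lemma row_mult: "x \<in> S \<Longrightarrow> row x \<cdot> x = x" and mult_col: "x \<in> S \<Longrightarrow> x \<cdot> col x = x"
  using mult_inv_S_mult by (simp_all add: row_def col_def)

(* e i and l e are idempotents of G, hence equal to e. *)

lemma e_mult_I: assumes i: "i \<in> I" shows "e \<cdot> i = e"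
proof (rule idempotent_in_G)
  have i': "i \<in> S" "i \<cdot> i = i" "i \<cdot> e = i" using i unfolding I_def by blast+
  then have "e \<cdot> (i \<cdot> e) = e \<cdot> i" "e \<cdot> i \<cdot> e = e \<cdot> i" by simp_all
  with sandwich_in_G[OF i'(1)] show "e \<cdot> i \<in> G" by simp
  have "e \<cdot> i \<cdot> (e \<cdot> i) = e \<cdot> (i \<cdot> e \<cdot> i)" using i'(1) by simp
  then show "e \<cdot> i \<cdot> (e \<cdot> i) = e \<cdot> i" using i' by simp
qed

lemma Lambda_mult_e: assumes l: "l \<in> \<Lambda>" shows "l \<cdot> e = e"
proof (rule idempotent_in_G)
  have l': "l \<in> S" "l \<cdot> l = l" "e \<cdot> l = l" using l unfolding \<Lambda>_def by blast+
  then have "e \<cdot> (l \<cdot> e) = l \<cdot> e" by (metis assoc e_in_S)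
  with sandwich_in_G[OF l'(1)] show "l \<cdot> e \<in> G" by simp
  have "l \<cdot> e \<cdot> (l \<cdot> e) = l \<cdot> (e \<cdot> l) \<cdot> e" using l'(1) by simp
  then show "l \<cdot> e \<cdot> (l \<cdot> e) = l \<cdot> e" using l' by simp
qed

lemma e_mult_I' [simp]: assumes "i \<in> I" "z \<in> S" shows "e \<cdot> (i \<cdot> z) = e \<cdot> z"
proof -
  have "e \<cdot> (i \<cdot> z) = e \<cdot> i \<cdot> z" using assms by (intro assoc[symmetric]) simp_all
  then show ?thesis using e_mult_I[OF assms(1)] by simp
qed

lemma I_mult: assumes "i \<in> I" "j \<in> I" shows "i \<cdot> j = i"
proof -
  have i: "i \<in> S" "i \<cdot> e = i" using assms(1) unfolding I_def by blast+
  have "i \<cdot> j = i \<cdot> e \<cdot> j" using i(2) by simp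
  also have "\<dots> = i \<cdot> (e \<cdot> j)" using i(1) assms(2) by (intro assoc) simp_all
  also have "\<dots> = i" using i e_mult_I[OF assms(2)] by simp
  finally show ?thesis .
qed

lemma Lambda_mult: assumes "l \<in> \<Lambda>" "k \<in> \<Lambda>" shows "l \<cdot> k = k"
proof -
  have k: "k \<in> S" "e \<cdot> k = k" using assms(2) unfolding \<Lambda>_def by blast+
  have "l \<cdot> k = l \<cdot> (e \<cdot> k)" using k(2) by simp
  also have "\<dots> = l \<cdot> e \<cdot> k" using assms(1) k(1) by (intro assoc[symmetric]) simp_all
  also have "\<dots> = k" using k Lambda_mult_e[OF assms(1)] by simp
  finally show ?thesis .
qed

lemma row_unique: assumes "i \<in> I" "x \<in> S" "i \<cdot> x = x" shows "row x = i"
proof -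
  have "i \<cdot> row x = i \<cdot> x \<cdot> inv_S x" using assms(1,2) by (simp add: row_def)
  also have "\<dots> = row x" using assms(3) by (simp add: row_def)
  finally have "i \<cdot> row x = row x" .
  then show ?thesis using I_mult[OF assms(1) row_in_I[OF assms(2)]] by simp
qed

lemma col_unique: assumes "l \<in> \<Lambda>" "x \<in> S" "x \<cdot> l = x" shows "col x = l"
proof -
  have "col x \<cdot> l = col x" using assms by (simp add: col_def)
  then show ?thesis using Lambda_mult[OF col_in_Lambda[OF assms(2)] assms(1)] by simp
qed

lemma rees_decomposition: assumes x: "x \<in> S" shows "row x \<cdot> core x \<cdot> col x = x"
proof -
  have "row x \<cdot> core x \<cdot> col x = x \<cdot> (inv_S x \<cdot> core x) \<cdot> inv_S x \<cdot> x"
    using x by (simp add: row_def col_def core_def)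
  also have "\<dots> = x \<cdot> inv_S x \<cdot> x" using x by (simp add: inv_S_def)
  finally show ?thesis using mult_inv_S_mult[OF x] by simp
qed

lemma Lambda_mult_I_in_G: assumes "l \<in> \<Lambda>" "i \<in> I" shows "l \<cdot> i \<in> G"
proof -
  have l: "l \<in> S" "e \<cdot> l = l" and i: "i \<in> S" "i \<cdot> e = i"
    using assms unfolding I_def \<Lambda>_def by blast+
  have "e \<cdot> (l \<cdot> i) = e \<cdot> l \<cdot> i" using l(1) i(1) by (intro assoc[symmetric]) simp_all
  then have "e \<cdot> (l \<cdot> i) = l \<cdot> i" using l(2) by simp
  moreover have "l \<cdot> i \<cdot> e = l \<cdot> i" using l(1) i by simp
  ultimately show ?thesis using l(1) i(1) unfolding G_def by simp
qed

definition rees_coords :: "'b \<Rightarrow> 'b \<times> 'b \<times> 'b" where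
  "rees_coords x = (row x, core x, col x)"

lemma bij_rees_coords: "bij_betw rees_coords S (I \<times> G \<times> \<Lambda>)"
proof (rule bij_betw_imageI)
  show "inj_on rees_coords S"
  proof (rule inj_onI)
    fix x y assume x: "x \<in> S" and y: "y \<in> S" and "rees_coords x = rees_coords y"
    then have eq: "row x = row y" "core x = core y" "col x = col y"
      by (simp_all add: rees_coords_def)
    have "x = row x \<cdot> core x \<cdot> col x" using rees_decomposition[OF x] by simp
    also have "\<dots> = row y \<cdot> core y \<cdot> col y" by (simp only: eq)
    also have "\<dots> = y" by (rule rees_decomposition[OF y])
    finally show "x = y" .
  qed
  show "rees_coords ` S = I \<times> G \<times> \<Lambda>"
  proof
    show "rees_coords ` S \<subseteq> I \<times> G \<times> \<Lambda>" using row_in_I col_in_Lambda by (auto simp: rees_coords_def)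
    show "I \<times> G \<times> \<Lambda> \<subseteq> rees_coords ` S"
    proof clarify
      fix i g l assume igl: "i \<in> I" "g \<in> G" "l \<in> \<Lambda>"
      define x where "x = i \<cdot> g \<cdot> l"
      have x: "x \<in> S" using igl by (simp add: x_def)
      have "row x = i" using igl x by (intro row_unique) (simp_all add: x_def)
      moreover have "col x = l" using igl x by (intro col_unique) (simp_all add: x_def)
      moreover have "core x = g" using igl e_mult_I Lambda_mult_e by (simp add: x_def core_def)
      ultimately show "(i, g, l) \<in> rees_coords ` S" using x by (force simp: rees_coords_def)
    qed
  qed
qed

lemma rees_coords_mult:
  assumes x: "x \<in> S" and y: "y \<in> S"
  shows "rees_coords (x \<cdot> y) = rees_mult (\<cdot>) (\<cdot>) (rees_coords x) (rees_coords y)"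
proof -
  have "row x \<cdot> (x \<cdot> y) = row x \<cdot> x \<cdot> y" using x y row_in_I by (intro assoc[symmetric]) simp_all
  then have "row (x \<cdot> y) = row x" using x y row_in_I row_mult by (intro row_unique) simp_all
  moreover have "col (x \<cdot> y) = col y"
    using x y col_in_Lambda mult_col by (intro col_unique) simp_all
  moreover have "core (x \<cdot> y) = core x \<cdot> (col x \<cdot> row y) \<cdot> core y"
  proof -
    have "core (x \<cdot> y) = e \<cdot> (row x \<cdot> core x \<cdot> col x) \<cdot> (row y \<cdot> core y \<cdot> col y) \<cdot> e"
      using x y rees_decomposition by (simp add: core_def)
    then show ?thesis
      using x y e_mult_I[OF row_in_I[OF x]] Lambda_mult_e[OF col_in_Lambda[OF y]]
      by (simp add: row_in_I col_in_Lambda)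
  qed
  ultimately show ?thesis by (simp add: rees_coords_def rees_mult_def)
qed

end

section \<open>Definable sets of tuples\<close>

lemma mem_tuples_iff: "xs \<in> tuples k \<longleftrightarrow> length xs = k"
  by (simp add: tuples_def)

(* An r-ary relation P on M^n, encoded as a subset of M^(r * n) by concatenation. *)
definition blocks :: "nat \<Rightarrow> nat \<Rightarrow> ('a list list \<Rightarrow> bool) \<Rightarrow> 'a list set" where
  "blocks n r P = {concat xs |xs. length xs = r \<and> (\<forall>x \<in> set xs. length x = n) \<and> P xs}"

lemma length_concat_blocks: "\<forall>x \<in> set xs. length x = n \<Longrightarrow> length (concat xs) = length xs * n"
  by (induction xs) auto

lemma concat_blocks_eq_iff:
  assumes "length xs = length ys" "\<forall>x \<in> set xs. length x = n" "\<forall>y \<in> set ys. length y = n"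
  shows "concat xs = concat ys \<longleftrightarrow> xs = ys"
proof (rule concat_eq_concat_iff)
  show "\<forall>(x, y) \<in> set (zip xs ys). length x = length y"
  proof clarify
    fix x y assume "(x, y) \<in> set (zip xs ys)"
    then have "x \<in> set xs" "y \<in> set ys" by (rule set_zip_leftD, rule set_zip_rightD)
    then show "length x = length y" using assms(2,3) by simp
  qed
qed (rule assms(1))

lemma nth_concat_blocks:
  "\<forall>x \<in> set xs. length x = n \<Longrightarrow> j < length xs \<Longrightarrow> t < n \<Longrightarrow> concat xs ! (j * n + t) = xs ! j ! t"
proof (induction xs arbitrary: j)
  case (Cons x xs)
  then show ?case by (cases j) (auto simp: nth_append)
qed simp

lemma split_blocks:
  "length v = r * n \<Longrightarrow> \<exists>xs. length xs = r \<and> (\<forall>x \<in> set xs. length x = n) \<and> v = concat xs"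
proof (induction r arbitrary: v)
  case (Suc r)
  then have "length (drop n v) = r * n" by simp
  then obtain xs where xs: "length xs = r" "\<forall>x \<in> set xs. length x = n" "drop n v = concat xs"
    using Suc.IH by blast
  have "v = concat (take n v # xs)" using xs(3) by (metis append_take_drop_id concat.simps(2))
  then show ?case using Suc.prems xs by (intro exI[of _ "take n v # xs"]) auto
qed simp

lemma concat_in_blocks:
  "length xs = r \<Longrightarrow> \<forall>x \<in> set xs. length x = n \<Longrightarrow> P xs \<Longrightarrow> concat xs \<in> blocks n r P"
  unfolding blocks_def by blast

lemma blocks_cong:
  assumes "\<And>xs. length xs = r \<Longrightarrow> \<forall>x \<in> set xs. length x = n \<Longrightarrow> P xs \<longleftrightarrow> Q xs"
  shows "blocks n r P = blocks n r Q"
  unfolding blocks_def using assms by blast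

lemma blocks_conj: "blocks n r (\<lambda>xs. P xs \<and> Q xs) = blocks n r P \<inter> blocks n r Q"
proof (intro equalityI subsetI)
  fix v assume "v \<in> blocks n r P \<inter> blocks n r Q"
  then obtain xs ys where "length xs = r" "\<forall>x \<in> set xs. length x = n" "P xs" "v = concat xs"
    "length ys = r" "\<forall>y \<in> set ys. length y = n" "Q ys" "v = concat ys"
    unfolding blocks_def by blast
  moreover from this have "xs = ys" using concat_blocks_eq_iff[of xs ys n] by simp
  ultimately show "v \<in> blocks n r (\<lambda>xs. P xs \<and> Q xs)" by (auto intro: concat_in_blocks)
qed (auto simp: blocks_def)

lemma take_blocks_Suc:
  "take (r * n) ` blocks n (Suc r) P = blocks n r (\<lambda>xs. \<exists>y. length y = n \<and> P (xs @ [y]))"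
proof (intro equalityI subsetI)
  fix v assume "v \<in> take (r * n) ` blocks n (Suc r) P"
  then obtain xs y where xs: "length xs = r" "\<forall>x \<in> set xs. length x = n" "length y = n"
    "P (xs @ [y])" "v = take (r * n) (concat (xs @ [y]))"
    unfolding blocks_def by (auto simp: length_Suc_conv_rev)
  then have "v = concat xs" using length_concat_blocks[OF xs(2)] by simp
  then show "v \<in> blocks n r (\<lambda>xs. \<exists>y. length y = n \<and> P (xs @ [y]))"
    using xs by (auto intro: concat_in_blocks)
next
  fix v assume "v \<in> blocks n r (\<lambda>xs. \<exists>y. length y = n \<and> P (xs @ [y]))"
  then obtain xs y where xs: "length xs = r" "\<forall>x \<in> set xs. length x = n" "length y = n"
    "P (xs @ [y])" "v = concat xs"
    unfolding blocks_def by blast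
  then have "v = take (r * n) (concat (xs @ [y]))" using length_concat_blocks[OF xs(2)] by simp
  moreover have "concat (xs @ [y]) \<in> blocks n (Suc r) P" using xs by (intro concat_in_blocks) auto
  ultimately show "v \<in> take (r * n) ` blocks n (Suc r) P" by blast
qed

lemma blocks_1: "blocks n 1 P = {x. length x = n \<and> P [x]}"
proof (intro equalityI subsetI)
  fix v assume "v \<in> blocks n 1 P"
  then show "v \<in> {x. length x = n \<and> P [x]}" unfolding blocks_def by (auto simp: length_Suc_conv)
qed (use concat_in_blocks[of "[v]" 1 n P for v] in auto)

lemma blocks_2: "blocks n 2 P = {x @ y |x y. length x = n \<and> length y = n \<and> P [x, y]}"
proof (intro equalityI subsetI)
  fix v assume "v \<in> blocks n 2 P"
  then show "v \<in> {x @ y |x y. length x = n \<and> length y = n \<and> P [x, y]}"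
    unfolding blocks_def by (auto simp: length_Suc_conv numeral_2_eq_2) blast
qed (use concat_in_blocks[of "[x, y]" 2 n P for x y] in auto)

lemma blocks_3:
  "blocks n 3 P = {x @ y @ z |x y z. length x = n \<and> length y = n \<and> length z = n \<and> P [x, y, z]}"
proof (intro equalityI subsetI)
  fix v assume "v \<in> blocks n 3 P"
  then show "v \<in> {x @ y @ z |x y z. length x = n \<and> length y = n \<and> length z = n \<and> P [x, y, z]}"
    unfolding blocks_def by (auto simp: length_Suc_conv numeral_3_eq_3) blast
qed (use concat_in_blocks[of "[x, y, z]" 3 n P for x y z] in auto)

lemma blocks_4:
  "blocks n 4 P = {x @ y @ z @ w |x y z w. length x = n \<and> length y = n \<and> length z = n \<and> length w = n
     \<and> P [x, y, z, w]}"
proof (intro equalityI subsetI)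
  fix v assume "v \<in> blocks n 4 P"
  then show "v \<in> {x @ y @ z @ w |x y z w. length x = n \<and> length y = n \<and> length z = n \<and> length w = n
     \<and> P [x, y, z, w]}"
    unfolding blocks_def by (auto simp: length_Suc_conv eval_nat_numeral) blast
qed (use concat_in_blocks[of "[x, y, z, w]" 4 n P for x y z w] in auto)

context
  fixes Def :: "nat \<Rightarrow> 'a::linorder list set set"
  assumes o_minimal: "o_minimal_structure Def"
begin

lemma definable_length: "A \<in> Def k \<Longrightarrow> xs \<in> A \<Longrightarrow> length xs = k"
  using o_minimal unfolding o_minimal_structure_def by (elim conjE) (auto simp: tuples_def)

lemma definable_tuples: "tuples k \<in> Def k"
  using o_minimal unfolding o_minimal_structure_def by (elim conjE) simp

lemma definable_Un: "A \<in> Def k \<Longrightarrow> B \<in> Def k \<Longrightarrow> A \<union> B \<in> Def k"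
  using o_minimal unfolding o_minimal_structure_def by (elim conjE) simp

lemma definable_complement: "A \<in> Def k \<Longrightarrow> tuples k - A \<in> Def k"
  using o_minimal unfolding o_minimal_structure_def by (elim conjE) simp

lemma definable_snoc: "A \<in> Def k \<Longrightarrow> {xs @ [y] |xs y. xs \<in> A} \<in> Def (Suc k)"
  using o_minimal unfolding o_minimal_structure_def by (elim conjE) simp

lemma definable_Cons: "A \<in> Def k \<Longrightarrow> {y # xs |xs y. xs \<in> A} \<in> Def (Suc k)"
  using o_minimal unfolding o_minimal_structure_def by (elim conjE) simp

lemma definable_hd_eq_last: "{xs \<in> tuples (Suc (Suc k)). hd xs = last xs} \<in> Def (Suc (Suc k))"
  using o_minimal unfolding o_minimal_structure_def by (elim conjE) simp

lemma definable_butlast: "A \<in> Def (Suc k) \<Longrightarrow> butlast ` A \<in> Def k"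
  using o_minimal unfolding o_minimal_structure_def by (elim conjE) simp

lemma definable_singleton: "{[a]} \<in> Def 1"
  using o_minimal unfolding o_minimal_structure_def by (elim conjE) simp

lemma definable_Int: assumes "A \<in> Def k" "B \<in> Def k" shows "A \<inter> B \<in> Def k"
proof -
  have "A \<inter> B = tuples k - ((tuples k - A) \<union> (tuples k - B))"
    using assms definable_length by (auto simp: mem_tuples_iff)
  then show ?thesis using assms by (simp add: definable_Un definable_complement)
qed

lemma definable_append_tuples: "A \<in> Def p \<Longrightarrow> {u @ w |u w. u \<in> A \<and> length w = q} \<in> Def (p + q)"
proof (induction q)
  case (Suc q)
  have "{u @ w |u w. u \<in> A \<and> length w = Suc q} =
      {xs @ [y] |xs y. xs \<in> {u @ w |u w. u \<in> A \<and> length w = q}}"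
    by (auto simp: length_Suc_conv_rev) blast+
  then show ?case using definable_snoc[OF Suc.IH[OF Suc.prems]] by simp
qed simp

lemma definable_tuples_append: "A \<in> Def p \<Longrightarrow> {w @ u |u w. u \<in> A \<and> length w = q} \<in> Def (q + p)"
proof (induction q)
  case (Suc q)
  have "{w @ u |u w. u \<in> A \<and> length w = Suc q} =
      {y # xs |xs y. xs \<in> {w @ u |u w. u \<in> A \<and> length w = q}}"
  proof (intro equalityI subsetI)
    fix x assume "x \<in> {w @ u |u w. u \<in> A \<and> length w = Suc q}"
    then obtain y w u where "x = y # (w @ u)" "u \<in> A" "length w = q"
      by (auto simp: length_Suc_conv)
    then show "x \<in> {y # xs |xs y. xs \<in> {w @ u |u w. u \<in> A \<and> length w = q}}" by blast
  next
    fix x assume "x \<in> {y # xs |xs y. xs \<in> {w @ u |u w. u \<in> A \<and> length w = q}}"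
    then obtain y u w where "x = (y # w) @ u" "u \<in> A" "length w = q" by auto
    then show "x \<in> {w @ u |u w. u \<in> A \<and> length w = Suc q}"
      by (intro CollectI exI[of _ u] exI[of _ "y # w"]) simp
  qed
  then show ?case using definable_Cons[OF Suc.IH[OF Suc.prems]] by simp
qed simp

lemma definable_append:
  assumes A: "A \<in> Def p" and B: "B \<in> Def q"
  shows "{u @ v |u v. u \<in> A \<and> v \<in> B} \<in> Def (p + q)"
proof -
  have "{u @ v |u v. u \<in> A \<and> v \<in> B} =
      {u @ w |u w. u \<in> A \<and> length w = q} \<inter> {w @ u |u w. u \<in> B \<and> length w = p}"
  proof (intro equalityI subsetI)
    fix x assume "x \<in> {u @ w |u w. u \<in> A \<and> length w = q} \<inter> {w @ u |u w. u \<in> B \<and> length w = p}"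
    then obtain u w u' w' where x: "x = u @ w" "u \<in> A" "x = w' @ u'" "u' \<in> B" "length w' = p"
      by blast
    then have "u = w' \<and> w = u'" using definable_length[OF A] by (simp add: append_eq_append_conv)
    then show "x \<in> {u @ v |u v. u \<in> A \<and> v \<in> B}" using x by blast
  qed (use definable_length[OF A] definable_length[OF B] in blast)
  then show ?thesis
    using definable_Int[OF definable_append_tuples[OF A] definable_tuples_append[OF B]] by simp
qed

lemma definable_take: "A \<in> Def (k + q) \<Longrightarrow> take k ` A \<in> Def k"
proof (induction q arbitrary: A)
  case 0
  then have "take k ` A = A" using definable_length by force
  then show ?case using 0 by simp
next
  case (Suc q)
  then have A: "A \<in> Def (Suc (k + q))" by simp
  have "take k ` A = take k ` butlast ` A"
    using definable_length[OF A] by (force simp: image_iff butlast_conv_take)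
  then show ?case using Suc.IH[OF definable_butlast[OF A]] by simp
qed

lemma definable_const: "{c} \<in> Def (length c)"
proof (induction c)
  case Nil
  have "tuples 0 = {[]}" by (auto simp: mem_tuples_iff)
  then show ?case using definable_tuples[of 0] by (metis list.size(3))
next
  case (Cons a c)
  have "{[a] @ v |v. v \<in> {c}} \<in> Def (1 + length c)"
    using definable_append[OF definable_singleton Cons.IH] by simp
  then show ?case by simp
qed

lemma definable_nth_eq_less:
  assumes "i < j" "j < N" shows "{xs \<in> tuples N. xs ! i = xs ! j} \<in> Def N"
proof -
  define d where "d = j - i - 1"
  define r where "r = N - j - 1"
  have j: "j = i + Suc d" and N: "N = i + (Suc (Suc d) + r)" using assms by (auto simp: d_def r_def)
  define D :: "'a list set" where "D = {xs \<in> tuples (Suc (Suc d)). hd xs = last xs}"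
  define E :: "'a list set"
    where "E = {w @ v |w v. w \<in> tuples i \<and> v \<in> {u @ z |u z. u \<in> D \<and> z \<in> tuples r}}"
  have "E \<in> Def N" unfolding E_def N D_def
    by (intro definable_append definable_tuples definable_hd_eq_last)
  moreover have "{xs \<in> tuples N. xs ! i = xs ! j} = E"
  proof (intro equalityI subsetI)
    fix xs :: "'a list" assume "xs \<in> {xs \<in> tuples N. xs ! i = xs ! j}"
    then have len: "length xs = N" and eq: "xs ! i = xs ! j" by (auto simp: mem_tuples_iff)
    define u where "u = take (Suc (Suc d)) (drop i xs)"
    define z where "z = drop (Suc (Suc d)) (drop i xs)"
    have "xs = take i xs @ u @ z" unfolding u_def z_def by (simp only: append_take_drop_id)
    moreover have "u \<in> D"
      using len eq N j by (simp add: D_def u_def hd_conv_nth last_conv_nth mem_tuples_iff)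
    moreover have "take i xs \<in> tuples i" "z \<in> tuples r"
      using len N by (simp_all add: z_def mem_tuples_iff)
    ultimately show "xs \<in> E" unfolding E_def by blast
  next
    fix xs :: "'a list" assume "xs \<in> E"
    then obtain w u z where xs: "xs = w @ u @ z" "length w = i" "u \<in> D" "length z = r"
      unfolding E_def by (auto simp: mem_tuples_iff)
    then have u: "length u = Suc (Suc d)" "hd u = last u" by (auto simp: D_def mem_tuples_iff)
    moreover have "u \<noteq> []" using u by auto
    ultimately have "u ! 0 = u ! Suc d" by (simp add: hd_conv_nth last_conv_nth)
    then show "xs \<in> {xs \<in> tuples N. xs ! i = xs ! j}"
      using xs u N j by (simp add: nth_append mem_tuples_iff)
  qed
  ultimately show ?thesis by simp
qed

lemma definable_nth_eq:
  assumes "i < N" "j < N" shows "{xs \<in> tuples N. xs ! i = xs ! j} \<in> Def N"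
proof -
  consider "i < j" | "i = j" | "j < i" by arith
  then show ?thesis
  proof cases
    case 3
    have eq: "{xs \<in> tuples N. xs ! i = xs ! j} = {xs \<in> tuples N. xs ! j = xs ! i}" by auto
    show ?thesis unfolding eq by (rule definable_nth_eq_less[OF 3 assms(1)])
  qed (use definable_nth_eq_less assms definable_tuples in auto)
qed

lemma definable_all_less:
  "(\<And>j. j < (r :: nat) \<Longrightarrow> {xs \<in> tuples N. P j xs} \<in> Def N) \<Longrightarrow> {xs \<in> tuples N. \<forall>j < r. P j xs} \<in> Def N"
proof (induction r)
  case 0
  then show ?case using definable_tuples by simp
next
  case (Suc r)
  have "{xs \<in> tuples N. \<forall>j < Suc r. P j xs} =
      {xs \<in> tuples N. \<forall>j < r. P j xs} \<inter> {xs \<in> tuples N. P r xs}"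
    by (auto simp: less_Suc_eq)
  then show ?case using definable_Int Suc by simp
qed

lemma definable_reindex:
  assumes A: "A \<in> Def N" and f: "length f = N" "\<forall>j \<in> set f. j < k"
  shows "{v \<in> tuples k. map (nth v) f \<in> A} \<in> Def k"
proof -
  define C where "C = {v @ u |v u. v \<in> tuples k \<and> u \<in> A} \<inter>
    {xs \<in> tuples (k + N). \<forall>j < N. xs ! (k + j) = xs ! (f ! j)}"
  have "C \<in> Def (k + N)" unfolding C_def
  proof (intro definable_Int definable_append definable_tuples A definable_all_less
      definable_nth_eq)
    show "f ! j < k + N" if "j < N" for j
      using f(2) nth_mem[of j f] f(1) that by fastforce
  qed simp
  moreover have "take k ` C = {v \<in> tuples k. map (nth v) f \<in> A}"
  proof (intro equalityI subsetI)
    fix v assume "v \<in> take k ` C"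
    then obtain u where u: "u \<in> A" "length v = k"
      and eq: "\<forall>j < N. (v @ u) ! (k + j) = (v @ u) ! (f ! j)"
      unfolding C_def by (auto simp: mem_tuples_iff)
    have "u = map (nth v) f"
      using definable_length[OF A u(1)] f u(2) eq by (auto intro!: nth_equalityI simp: nth_append)
    then show "v \<in> {v \<in> tuples k. map (nth v) f \<in> A}" using u by (simp add: mem_tuples_iff)
  next
    fix v assume v: "v \<in> {v \<in> tuples k. map (nth v) f \<in> A}"
    then have "v @ map (nth v) f \<in> C"
      unfolding C_def using f by (auto simp: nth_append mem_tuples_iff)
    moreover have "take k (v @ map (nth v) f) = v" using v by (simp add: mem_tuples_iff)
    ultimately show "v \<in> take k ` C" by (metis image_eqI)
  qed
  ultimately show ?thesis using definable_take by metis
qed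

lemma definable_blocks_nths:
  assumes A: "A \<in> Def (length js * n)" and js: "\<forall>j \<in> set js. j < r"
  shows "blocks n r (\<lambda>xs. concat (map (nth xs) js) \<in> A) \<in> Def (r * n)"
proof -
  define f where "f = concat (map (\<lambda>j. [j * n..<j * n + n]) js)"
  have f: "length f = length js * n" "\<forall>i \<in> set f. i < r * n"
  proof -
    show "length f = length js * n" unfolding f_def by (induction js) auto
    have "Suc j * n \<le> r * n" if "j \<in> set js" for j using js that by (intro mult_le_mono1) auto
    then show "\<forall>i \<in> set f. i < r * n" unfolding f_def by fastforce
  qed
  have reindex: "map (nth (concat xs)) f = concat (map (nth xs) js)"
    if xs: "length xs = r" "\<forall>x \<in> set xs. length x = n" for xs
  proof -
    have "map (nth (concat xs)) [j * n..<j * n + n] = xs ! j" if "j \<in> set js" for j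
    proof (rule nth_equalityI)
      have "length (xs ! j) = n" using js that xs by simp
      then show "length (map (nth (concat xs)) [j * n..<j * n + n]) = length (xs ! j)" by simp
    next
      fix t assume "t < length (map (nth (concat xs)) [j * n..<j * n + n])"
      then show "map (nth (concat xs)) [j * n..<j * n + n] ! t = xs ! j ! t"
        using nth_concat_blocks[OF xs(2), of j t] js that xs(1) by (simp add: add.commute)
    qed
    then show ?thesis unfolding f_def map_concat by (simp cong: map_cong)
  qed
  have "blocks n r (\<lambda>xs. concat (map (nth xs) js) \<in> A) = {v \<in> tuples (r * n). map (nth v) f \<in> A}"
  proof (intro equalityI subsetI)
    fix v assume "v \<in> blocks n r (\<lambda>xs. concat (map (nth xs) js) \<in> A)"
    then show "v \<in> {v \<in> tuples (r * n). map (nth v) f \<in> A}"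
      unfolding blocks_def using reindex length_concat_blocks by (auto simp: mem_tuples_iff)
  next
    fix v assume v: "v \<in> {v \<in> tuples (r * n). map (nth v) f \<in> A}"
    obtain xs where xs: "length xs = r" "\<forall>x \<in> set xs. length x = n" "v = concat xs"
      using split_blocks[of v r n] v by (auto simp: mem_tuples_iff)
    then show "v \<in> blocks n r (\<lambda>xs. concat (map (nth xs) js) \<in> A)"
      using v reindex[OF xs(1,2)] by (auto intro: concat_in_blocks)
  qed
  then show ?thesis using definable_reindex[OF A f] by simp
qed

lemma definable_blocks_nth: "A \<in> Def n \<Longrightarrow> a < r \<Longrightarrow> blocks n r (\<lambda>xs. xs ! a \<in> A) \<in> Def (r * n)"
  using definable_blocks_nths[of A "[a]" n r] by simp

lemma definable_blocks_nth2:
  "A \<in> Def (n + n) \<Longrightarrow> a < r \<Longrightarrow> b < r \<Longrightarrow> blocks n r (\<lambda>xs. xs ! a @ xs ! b \<in> A) \<in> Def (r * n)"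
  using definable_blocks_nths[of A "[a, b]" n r] by simp

lemma definable_blocks_nth3:
  "A \<in> Def (n + n + n) \<Longrightarrow> a < r \<Longrightarrow> b < r \<Longrightarrow> c < r \<Longrightarrow>
    blocks n r (\<lambda>xs. xs ! a @ xs ! b @ xs ! c \<in> A) \<in> Def (r * n)"
  using definable_blocks_nths[of A "[a, b, c]" n r] by (simp add: add.assoc)

lemma definable_blocks_cong:
  "blocks n r P \<in> Def k \<Longrightarrow> (\<And>xs. length xs = r \<Longrightarrow> \<forall>x \<in> set xs. length x = n \<Longrightarrow> P xs \<longleftrightarrow> Q xs)
    \<Longrightarrow> blocks n r Q \<in> Def k"
  using blocks_cong[of r n P Q] by simp

lemma definable_blocks_conj:
  "blocks n r P \<in> Def k \<Longrightarrow> blocks n r Q \<in> Def k \<Longrightarrow> blocks n r (\<lambda>xs. P xs \<and> Q xs) \<in> Def k"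
  unfolding blocks_conj by (rule definable_Int)

lemma definable_blocks_ex:
  "blocks n (Suc r) P \<in> Def (Suc r * n) \<Longrightarrow>
    blocks n r (\<lambda>xs. \<exists>y. length y = n \<and> P (xs @ [y])) \<in> Def (r * n)"
  unfolding take_blocks_Suc[symmetric] by (rule definable_take) (simp add: add.commute)

lemma definable_blocks_fix_last:
  assumes P: "blocks n (Suc r) P \<in> Def (Suc r * n)" and c: "length c = n"
  shows "blocks n r (\<lambda>xs. P (xs @ [c])) \<in> Def (r * n)"
proof -
  have "blocks n (Suc r) (\<lambda>xs. P xs \<and> xs ! r \<in> {c}) \<in> Def (Suc r * n)"
    using definable_const[of c] c by (intro definable_blocks_conj P definable_blocks_nth) simp_all
  from definable_blocks_ex[OF this] show ?thesis
    by (rule definable_blocks_cong) (auto simp: nth_append c)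
qed

lemma definable_blocks_2_fix:
  assumes "blocks n 2 P \<in> Def (2 * n)" "length c = n"
  shows "{x. length x = n \<and> P [x, c]} \<in> Def n"
proof -
  have "blocks n (Suc 1) P \<in> Def (Suc 1 * n)" using assms(1) by (simp only: Suc_1)
  from definable_blocks_fix_last[OF this assms(2)] show ?thesis unfolding blocks_1 by simp
qed

end

section \<open>Definability of the Rees decomposition\<close>

locale definable_completely_simple_semigroup = completely_simple_semigroup S m e
  for Def :: "nat \<Rightarrow> 'a::linorder list set set" and n :: nat
    and S :: "'a list set" and m :: "'a list \<Rightarrow> 'a list \<Rightarrow> 'a list" (infixl "\<cdot>" 70) and e +
  assumes o_minimal: "o_minimal_structure Def"
    and definable_mult: "definable_op Def n S m"
begin

definition mult_graph :: "'a list set" where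
  "mult_graph = {x @ y @ x \<cdot> y |x y. x \<in> S \<and> y \<in> S}"

lemma definable_mult_graph: "mult_graph \<in> Def (n + n + n)"
  using definable_mult unfolding definable_op_def mult_graph_def by (elim conjE)

lemma length_S: "x \<in> S \<Longrightarrow> length x = n"
  using definable_mult definable_length[OF o_minimal, of S n x] unfolding definable_op_def by simp

lemma append_in_mult_graph_iff:
  assumes "length a = n" "length b = n"
  shows "a @ b @ c \<in> mult_graph \<longleftrightarrow> a \<in> S \<and> b \<in> S \<and> a \<cdot> b = c"
proof
  assume "a @ b @ c \<in> mult_graph"
  then obtain x y where xy: "a @ b @ c = x @ y @ x \<cdot> y" "x \<in> S" "y \<in> S"
    unfolding mult_graph_def by blast
  then have "a = x \<and> b = y \<and> c = x \<cdot> y"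
    using assms length_S by (simp add: append_eq_append_conv)
  with xy show "a \<in> S \<and> b \<in> S \<and> a \<cdot> b = c" by simp
qed (auto simp: mult_graph_def)

lemma definable_idempotents: "{x \<in> S. x \<cdot> x = x} \<in> Def n"
proof -
  have "blocks n 1 (\<lambda>xs. xs ! 0 @ xs ! 0 @ xs ! 0 \<in> mult_graph) \<in> Def (1 * n)"
    by (intro definable_blocks_nth3[OF o_minimal] definable_mult_graph) simp_all
  moreover have "blocks n 1 (\<lambda>xs. xs ! 0 @ xs ! 0 @ xs ! 0 \<in> mult_graph) = {x \<in> S. x \<cdot> x = x}"
    unfolding blocks_1 by (force simp: append_in_mult_graph_iff length_S)
  ultimately show ?thesis by simp
qed

lemma definable_right_fixed: assumes c: "c \<in> S" shows "{x \<in> S. x \<cdot> c = x} \<in> Def n"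
proof -
  have "blocks n 2 (\<lambda>xs. xs ! 0 @ xs ! 1 @ xs ! 0 \<in> mult_graph) \<in> Def (2 * n)"
    by (intro definable_blocks_nth3[OF o_minimal] definable_mult_graph) simp_all
  from definable_blocks_2_fix[OF o_minimal this length_S[OF c]]
  have "{x. length x = n \<and> x @ c @ x \<in> mult_graph} \<in> Def n" by simp
  moreover have "{x. length x = n \<and> x @ c @ x \<in> mult_graph} = {x \<in> S. x \<cdot> c = x}"
    using c by (force simp: append_in_mult_graph_iff length_S)
  ultimately show ?thesis by simp
qed

lemma definable_left_fixed: assumes c: "c \<in> S" shows "{x \<in> S. c \<cdot> x = x} \<in> Def n"
proof -
  have "blocks n 2 (\<lambda>xs. xs ! 1 @ xs ! 0 @ xs ! 0 \<in> mult_graph) \<in> Def (2 * n)"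
    by (intro definable_blocks_nth3[OF o_minimal] definable_mult_graph) simp_all
  from definable_blocks_2_fix[OF o_minimal this length_S[OF c]]
  have "{x. length x = n \<and> c @ x @ x \<in> mult_graph} \<in> Def n" by simp
  moreover have "{x. length x = n \<and> c @ x @ x \<in> mult_graph} = {x \<in> S. c \<cdot> x = x}"
    using c by (force simp: append_in_mult_graph_iff length_S)
  ultimately show ?thesis by simp
qed

lemma definable_I: "I \<in> Def n"
proof -
  have "I = {x \<in> S. x \<cdot> x = x} \<inter> {x \<in> S. x \<cdot> e = x}" unfolding I_def by blast
  with definable_Int[OF o_minimal definable_idempotents definable_right_fixed[OF e_in_S]]
  show ?thesis by (simp only:)
qed

lemma definable_Lambda: "\<Lambda> \<in> Def n"
proof -
  have "\<Lambda> = {x \<in> S. x \<cdot> x = x} \<inter> {x \<in> S. e \<cdot> x = x}" unfolding \<Lambda>_def by blast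
  with definable_Int[OF o_minimal definable_idempotents definable_left_fixed[OF e_in_S]]
  show ?thesis by (simp only:)
qed

lemma definable_G: "G \<in> Def n"
proof -
  have "G = {x \<in> S. e \<cdot> x = x} \<inter> {x \<in> S. x \<cdot> e = x}" unfolding G_def by blast
  with definable_Int[OF o_minimal definable_left_fixed[OF e_in_S] definable_right_fixed[OF e_in_S]]
  show ?thesis by (simp only:)
qed

lemma definable_mult_graph_on:
  assumes A: "A \<in> Def n" "A \<subseteq> S" and B: "B \<in> Def n" "B \<subseteq> S"
  shows "{x @ y @ x \<cdot> y |x y. x \<in> A \<and> y \<in> B} \<in> Def (n + n + n)"
proof -
  let ?P = "\<lambda>xs. (xs ! 0 @ xs ! 1 @ xs ! 2 \<in> mult_graph \<and> xs ! 0 \<in> A) \<and> xs ! 1 \<in> B"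
  have "blocks n 3 ?P \<in> Def (3 * n)"
    by (intro definable_blocks_conj[OF o_minimal] definable_blocks_nth3[OF o_minimal]
        definable_blocks_nth[OF o_minimal] definable_mult_graph A B) simp_all
  moreover have "blocks n 3 ?P = {x @ y @ x \<cdot> y |x y. x \<in> A \<and> y \<in> B}"
  proof (intro equalityI subsetI)
    fix v assume "v \<in> blocks n 3 ?P"
    then obtain x y z where "v = x @ y @ z" "x @ y @ z \<in> mult_graph" "x \<in> A" "y \<in> B"
      "length x = n" "length y = n"
      unfolding blocks_3 by auto
    then show "v \<in> {x @ y @ x \<cdot> y |x y. x \<in> A \<and> y \<in> B}"
      by (auto simp: append_in_mult_graph_iff)
  next
    fix v assume "v \<in> {x @ y @ x \<cdot> y |x y. x \<in> A \<and> y \<in> B}"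
    then obtain x y where v: "v = x @ y @ x \<cdot> y" "x \<in> A" "y \<in> B" by blast
    then have "x \<in> S" "y \<in> S" using A(2) B(2) by auto
    then show "v \<in> blocks n 3 ?P" unfolding blocks_3 using v
      by (intro CollectI exI[of _ x] exI[of _ y] exI[of _ "x \<cdot> y"])
        (simp add: append_in_mult_graph_iff length_S)
  qed
  ultimately show ?thesis by (simp add: numeral_3_eq_3 add.assoc)
qed

lemma definable_core_graph: "{x @ core x |x. x \<in> S} \<in> Def (n + n)"
proof -
  let ?Q = "\<lambda>xs. e @ xs ! 0 @ xs ! 2 \<in> mult_graph \<and> xs ! 2 @ e @ xs ! 1 \<in> mult_graph"
  have "blocks n (Suc 3)
      (\<lambda>xs. xs ! 3 @ xs ! 0 @ xs ! 2 \<in> mult_graph \<and> xs ! 2 @ xs ! 3 @ xs ! 1 \<in> mult_graph)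
      \<in> Def (Suc 3 * n)"
    by (intro definable_blocks_conj[OF o_minimal] definable_blocks_nth3[OF o_minimal]
        definable_mult_graph) simp_all
  from definable_blocks_fix_last[OF o_minimal this length_S[OF e_in_S]]
  have "blocks n 3 ?Q \<in> Def (3 * n)"
    by (rule definable_blocks_cong[OF o_minimal]) (auto simp: nth_append)
  then have "blocks n 2 (\<lambda>xs. \<exists>y. length y = n \<and> ?Q (xs @ [y])) \<in> Def (2 * n)"
    using definable_blocks_ex[OF o_minimal, of n 2 ?Q] by simp
  moreover have "blocks n 2 (\<lambda>xs. \<exists>y. length y = n \<and> ?Q (xs @ [y])) = {x @ core x |x. x \<in> S}"
  proof (intro equalityI subsetI)
    fix v assume "v \<in> blocks n 2 (\<lambda>xs. \<exists>y. length y = n \<and> ?Q (xs @ [y]))"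
    then obtain x g y where v: "v = x @ g" "length x = n" "length y = n"
      "e @ x @ y \<in> mult_graph" "y @ e @ g \<in> mult_graph"
      unfolding blocks_2 by auto
    then have "x \<in> S" "g = core x"
      using length_S by (auto simp: append_in_mult_graph_iff core_def)
    then show "v \<in> {x @ core x |x. x \<in> S}" using v(1) by blast
  next
    fix v assume "v \<in> {x @ core x |x. x \<in> S}"
    then obtain x where v: "v = x @ core x" "x \<in> S" by blast
    then have "?Q ([x, core x] @ [e \<cdot> x])"
      using length_S by (simp add: append_in_mult_graph_iff core_def)
    moreover have "length x = n" "length (core x) = n" "length (e \<cdot> x) = n"
      using v(2) by (simp_all add: length_S)
    ultimately show "v \<in> blocks n 2 (\<lambda>xs. \<exists>y. length y = n \<and> ?Q (xs @ [y]))"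
      unfolding blocks_2 using v(1) by blast
  qed
  ultimately show ?thesis by (simp add: mult_2)
qed

lemma definable_rees_coords_graph:
  "{x @ row x @ core x @ col x |x. x \<in> S} \<in> Def (n + n + n + n)"
proof -
  let ?P = "\<lambda>xs. (((xs ! 1 \<in> I \<and> xs ! 1 @ xs ! 0 @ xs ! 0 \<in> mult_graph) \<and> xs ! 3 \<in> \<Lambda>)
    \<and> xs ! 0 @ xs ! 3 @ xs ! 0 \<in> mult_graph) \<and> xs ! 0 @ xs ! 2 \<in> {x @ core x |x. x \<in> S}"
  have "blocks n 4 ?P \<in> Def (4 * n)"
    by (intro definable_blocks_conj[OF o_minimal] definable_blocks_nth3[OF o_minimal]
        definable_blocks_nth[OF o_minimal] definable_blocks_nth2[OF o_minimal]
        definable_mult_graph definable_I definable_Lambda definable_core_graph) simp_all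
  moreover have "blocks n 4 ?P = {x @ row x @ core x @ col x |x. x \<in> S}"
  proof (intro equalityI subsetI)
    fix v assume "v \<in> blocks n 4 ?P"
    then obtain x i g l where v: "v = x @ i @ g @ l" "length x = n" "length i = n" "?P [x, i, g, l]"
      unfolding blocks_4 by blast
    then have i: "i \<in> I" "i @ x @ x \<in> mult_graph" and l: "l \<in> \<Lambda>" "x @ l @ x \<in> mult_graph"
      and g: "x @ g \<in> {x @ core x |x. x \<in> S}"
      by (simp_all only: nth_Cons_0 nth_Cons_Suc numeral_3_eq_3 numeral_2_eq_2 One_nat_def)
    then have x: "x \<in> S" "i \<cdot> x = x" "x \<cdot> l = x"
      using v(2,3) length_S by (auto simp: append_in_mult_graph_iff)
    from g obtain x' where "x @ g = x' @ core x'" "x' \<in> S" by blast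
    then have "g = core x" using v(2) length_S by (auto simp: append_eq_append_conv)
    moreover have "row x = i" "col x = l" using x i(1) l(1) by (simp_all add: row_unique col_unique)
    ultimately show "v \<in> {x @ row x @ core x @ col x |x. x \<in> S}" using v(1) x(1) by blast
  next
    fix v assume "v \<in> {x @ row x @ core x @ col x |x. x \<in> S}"
    then obtain x where v: "v = x @ row x @ core x @ col x" "x \<in> S" by blast
    then have "?P [x, row x, core x, col x]"
      using row_in_I col_in_Lambda row_mult mult_col length_S
      by (auto simp: append_in_mult_graph_iff)
    moreover have "length x = n" "length (row x) = n" "length (core x) = n" "length (col x) = n"
      using v(2) row_in_I col_in_Lambda by (simp_all add: length_S)
    ultimately show "v \<in> blocks n 4 ?P" unfolding blocks_4 using v(1) by blast
  qed
  ultimately show ?thesis by (simp add: eval_nat_numeral add.assoc)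
qed

lemma definable_op_G: "definable_op Def n G (\<cdot>)"
proof -
  have "G \<subseteq> S" by auto
  then show ?thesis unfolding definable_op_def
    using definable_G definable_mult_graph_on[OF definable_G _ definable_G] by auto
qed

lemma definable_sandwich_matrix: "{l @ i @ l \<cdot> i |l i. l \<in> \<Lambda> \<and> i \<in> I} \<in> Def (n + n + n)"
proof -
  have "\<Lambda> \<subseteq> S" "I \<subseteq> S" by auto
  then show ?thesis using definable_mult_graph_on[OF definable_Lambda _ definable_I] by simp
qed

end

theorem mainTheorem17:
  fixes Def :: "nat \<Rightarrow> 'a::{dense_linorder,no_top,no_bot} list set set"
    and S :: "'a list set" and m :: "'a list \<Rightarrow> 'a list \<Rightarrow> 'a list" and n :: nat
  assumes "o_minimal_structure Def"
    and "definable_choice Def"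
    and "aleph1_saturated Def"
    and "definable_op Def n S m"
    and "completely_simple S m"
  shows "\<exists>a b k (I :: 'a list set) (\<Lambda> :: 'a list set) (G :: 'a list set) mg e P \<phi>.
    I \<in> Def a \<and> \<Lambda> \<in> Def b \<and> I \<noteq> {} \<and> \<Lambda> \<noteq> {} \<and>
    definable_op Def k G mg \<and> group \<lparr>carrier = G, mult = mg, one = e\<rparr> \<and>
    (\<forall>l\<in>\<Lambda>. \<forall>i\<in>I. P l i \<in> G) \<and>
    {l @ i @ P l i |l i. l \<in> \<Lambda> \<and> i \<in> I} \<in> Def (b + a + k) \<and>
    bij_betw \<phi> S (I \<times> G \<times> \<Lambda>) \<and>
    (\<forall>x\<in>S. \<forall>y\<in>S. \<phi> (m x y) = rees_mult mg P (\<phi> x) (\<phi> y)) \<and>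
    {x @ fst (\<phi> x) @ fst (snd (\<phi> x)) @ snd (snd (\<phi> x)) |x. x \<in> S} \<in> Def (n + a + k + b)"
proof -
  obtain e where "primitive_idempotent S m e" "simple_semigroup S m"
    using assms(5) unfolding completely_simple_def by blast
  then interpret definable_completely_simple_semigroup Def n S m e
    using assms(1,4) by unfold_locales
  have "{x @ fst (rees_coords x) @ fst (snd (rees_coords x)) @ snd (snd (rees_coords x)) |x. x \<in> S}
      = {x @ row x @ core x @ col x |x. x \<in> S}"
    by (simp add: rees_coords_def)
  then show ?thesis
    using definable_I definable_Lambda e_in_I e_in_Lambda definable_op_G group_G Lambda_mult_I_in_G
      definable_sandwich_matrix bij_rees_coords rees_coords_mult definable_rees_coords_graph
    by (intro exI[of _ n] exI[of _ I] exI[of _ \<Lambda>] exI[of _ G] exI[of _ m] exI[of _ e] exI[of _ m]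
        exI[of _ rees_coords]) auto
qed

end
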